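(* Let $q$ be prime and let $S\in\mathbb{Z}_q^{k\times 2n}$ be the generator matrix of a non-degenerate stabilizer code $[[n,n-k,d]]_q$. Let $M\in\mathbb{Z}^{k\times 2n}$ be an invariant form of this code (i.e. $M\equiv S\pmod q$ and the rows of $M$ pairwise have integer symplectic product $0$), and let $B$ be the maximal absolute value of an entry of $M$. Set $$p^*=B^{2(d-1)}\,\bigl(2(d-1)\bigr)^{d-1}.$$ Then for every prime $p>p^*$, the code over $p$ levels given by the generator matrix $M \bmod p$, with parameters $[[n,n-k,d']]_p$, has distance $d'\ge d$.
   Context: For a prime $r$, $n$-qudit Paulis over $r$ levels (up to phase) are represented as vectors $(a|b)\in\mathbb{Z}_r^{2n}$ (exponents of $X$ and $Z$ on each qudit). The symplectic product of $u=(u_x|u_z)$ and $v=(v_x|v_z)$ is $u\odot v=\sum_{l=1}^n (v_{z,l}u_{x,l}-v_{x,l}u_{z,l})$, computed mod $r$ (or over $\mathbb{Z}$ for integer vectors). The weight of $(a|b)$ is the number of indices $l$ with $(a_l,b_l)\neq(0,0)$. For a stabilizer code over $r$ levels with generator matrix $G$ (rows pairwise symplectically orthogonal mod $r$), the distance is the minimum weight of a nonzero $e\in\mathbb{Z}_r^{2n}$ with $e\odot g\equiv 0\pmod r$ for every row $g$ of $G$ (an undetectable error). The code is non-degenerate if every non-identity element of the stabilizer group has weight at least $d$. The code has $k$ generators on $n$ qudits, hence $n-k$ logical qudits; notation $[[n,n-k,d]]_q$. *)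

theory Defs
  imports "HOL-Computational_Algebra.Primes"
begin

text \<open>An n-qudit Pauli (up to phase) is a pair (a, b) of integer vectors
  (X-exponents, Z-exponents), indexed by qudits l < n.  An element of
  Z_r^{2n} is represented by its canonical representatives in {0..<r}.\<close>

type_synonym pvec = "(nat \<Rightarrow> int) \<times> (nat \<Rightarrow> int)"

definition sympl :: "nat \<Rightarrow> pvec \<Rightarrow> pvec \<Rightarrow> int" where
  "sympl n u v = (\<Sum>l<n. snd v l * fst u l - fst v l * snd u l)"

definition weight :: "nat \<Rightarrow> pvec \<Rightarrow> nat" where
  "weight n u = card {l. l < n \<and> (fst u l, snd u l) \<noteq> (0, 0)}"

definition is_vec :: "nat \<Rightarrow> nat \<Rightarrow> pvec \<Rightarrow> bool" where
  "is_vec r n e \<longleftrightarrow> (\<forall>l<n. fst e l \<in> {0..<int r} \<and> snd e l \<in> {0..<int r})"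

definition reduce :: "nat \<Rightarrow> pvec \<Rightarrow> pvec" where
  "reduce r u = ((\<lambda>l. fst u l mod int r), (\<lambda>l. snd u l mod int r))"

definition undetectable :: "nat \<Rightarrow> nat \<Rightarrow> nat \<Rightarrow> (nat \<Rightarrow> pvec) \<Rightarrow> pvec \<Rightarrow> bool" where
  "undetectable r n k G e \<longleftrightarrow> is_vec r n e \<and> weight n e > 0 \<and>
     (\<forall>i<k. sympl n e (G i) mod int r = 0)"

definition distance :: "nat \<Rightarrow> nat \<Rightarrow> nat \<Rightarrow> (nat \<Rightarrow> pvec) \<Rightarrow> nat" where
  "distance r n k G = (LEAST w. \<exists>e. undetectable r n k G e \<and> weight n e = w)"

definition stab_group :: "nat \<Rightarrow> nat \<Rightarrow> nat \<Rightarrow> (nat \<Rightarrow> pvec) \<Rightarrow> pvec set" where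
  "stab_group r n k G = {reduce r ((\<lambda>l. \<Sum>i<k. c i * fst (G i) l), (\<lambda>l. \<Sum>i<k. c i * snd (G i) l))
                         | c :: nat \<Rightarrow> int. True}"

definition non_degenerate :: "nat \<Rightarrow> nat \<Rightarrow> nat \<Rightarrow> (nat \<Rightarrow> pvec) \<Rightarrow> nat \<Rightarrow> bool" where
  "non_degenerate r n k G d \<longleftrightarrow> (\<forall>s\<in>stab_group r n k G. weight n s > 0 \<longrightarrow> weight n s \<ge> d)"

definition stabilizer_generators :: "nat \<Rightarrow> nat \<Rightarrow> nat \<Rightarrow> (nat \<Rightarrow> pvec) \<Rightarrow> bool" where
  "stabilizer_generators r n k G \<longleftrightarrow> (\<forall>i<k. is_vec r n (G i)) \<and>
     (\<forall>i<k. \<forall>j<k. sympl n (G i) (G j) mod int r = 0)"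

definition invariant_form :: "nat \<Rightarrow> nat \<Rightarrow> nat \<Rightarrow> (nat \<Rightarrow> pvec) \<Rightarrow> (nat \<Rightarrow> pvec) \<Rightarrow> bool" where
  "invariant_form q n k S M \<longleftrightarrow>
     (\<forall>i<k. \<forall>l<n. fst (M i) l mod int q = fst (S i) l \<and> snd (M i) l mod int q = snd (S i) l) \<and>
     (\<forall>i<k. \<forall>j<k. sympl n (M i) (M j) = 0)"

definition max_entry :: "nat \<Rightarrow> nat \<Rightarrow> (nat \<Rightarrow> pvec) \<Rightarrow> int" where
  "max_entry n k M = Max (insert 0 ({\<bar>fst (M i) l\<bar> | i l. i < k \<and> l < n} \<union>
                                  {\<bar>snd (M i) l\<bar> | i l. i < k \<and> l < n}))"

end

theory Submission
  imports Defs "Jordan_Normal_Form.Determinant"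
begin

text \<open>Suppose an error e of weight w < d were undetectable for the code M mod p.  On the support
  of e the detection conditions form an integer linear system in 2w unknowns whose coefficients
  are entries of M, and e gives a solution that is nonzero mod p.  Modulo q the same system has
  only the trivial solution, since a nontrivial one would be an undetectable error of weight at
  most w < d for the original code; hence some 2w x 2w minor of the system is not divisible by q,
  and in particular is a nonzero integer.  By Hadamard's inequality this minor is at most
  (2w)^w B^(2w) \<le> p* < p in absolute value, so it is a unit mod p as well, and the system has
  only the trivial solution mod p, a contradiction.\<close>

section \<open>Integer matrices modulo a prime\<close>

definition det_fun :: "nat \<Rightarrow> (nat \<Rightarrow> nat \<Rightarrow> 'a::comm_ring_1) \<Rightarrow> 'a" where
  "det_fun m f = det (mat m m (\<lambda>(i, j). f i j))"

lemma det_fun_eliminate_first_column: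
  fixes f :: "nat \<Rightarrow> nat \<Rightarrow> 'a::comm_ring_1"
  assumes pivot: "\<alpha> = \<gamma> * f 0 0"
  shows "f 0 0 * det_fun m (\<lambda>i j. \<alpha> * f (Suc i) (Suc j) - \<gamma> * f (Suc i) 0 * f 0 (Suc j))
         = \<alpha> ^ m * det_fun (Suc m) f"
proof -
  \<comment> \<open>\<open>L\<close> scales rows 1..m by \<open>\<alpha>\<close> and subtracts \<open>\<gamma> * f i 0\<close> times row 0, which clears
      the first column below the pivot.\<close>
  define F where "F = mat (Suc m) (Suc m) (\<lambda>(i, j). f i j)"
  define L where "L = mat (Suc m) (Suc m) (\<lambda>(i, j). if i = 0 then (if j = 0 then 1 else 0)
     else if j = 0 then - \<gamma> * f i 0 else if i = j then \<alpha> else (0::'a))"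
  have F: "F \<in> carrier_mat (Suc m) (Suc m)" and L: "L \<in> carrier_mat (Suc m) (Suc m)"
    unfolding F_def L_def by auto
  have "diag_mat L = 1 # map (\<lambda>i. \<alpha>) [1..<Suc m]"
    unfolding diag_mat_def using L
    by (auto simp: L_def upt_conv_Cons simp del: upt_Suc intro!: map_cong)
  then have det_L: "det L = \<alpha> ^ m"
    using det_lower_triangular[OF _ L] by (simp add: L_def map_replicate_const del: upt_Suc)
  have LF: "(L * F) $$ (i, j) = (if i = 0 then f 0 j else \<alpha> * f i j - \<gamma> * f i 0 * f 0 j)"
    if "i < Suc m" "j < Suc m" for i j
  proof -
    have "(L * F) $$ (i, j) = (\<Sum>l<Suc m. L $$ (i, l) * f l j)"
      using that F L by (simp add: scalar_prod_def F_def lessThan_atLeast0)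
    also have "\<dots> = (\<Sum>l<Suc m. (if l = 0 then L $$ (i, 0) * f 0 j else 0)
                                 + (if l = i \<and> i \<noteq> 0 then \<alpha> * f i j else 0))"
      using that by (intro sum.cong) (auto simp: L_def)
    finally show ?thesis
      using that by (simp add: sum.distrib L_def)
  qed
  have LF_carrier: "L * F \<in> carrier_mat (Suc m) (Suc m)" using L F by auto
  have "det (L * F) = (\<Sum>i<Suc m. (L * F) $$ (i, 0) * cofactor (L * F) i 0)"
    by (rule laplace_expansion_column[OF LF_carrier]) simp
  also have "\<dots> = f 0 0 * cofactor (L * F) 0 0"
    by (simp add: sum.lessThan_Suc_shift LF pivot del: sum.lessThan_Suc)
  finally have det_LF: "det (L * F) = f 0 0 * cofactor (L * F) 0 0" .
  have "mat_delete (L * F) 0 0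
      = mat m m (\<lambda>(i, j). \<alpha> * f (Suc i) (Suc j) - \<gamma> * f (Suc i) 0 * f 0 (Suc j))"
    using LF_carrier by (intro eq_matI) (auto simp: mat_delete_def LF simp del: index_mult_mat)
  then have "cofactor (L * F) 0 0
      = det_fun m (\<lambda>i j. \<alpha> * f (Suc i) (Suc j) - \<gamma> * f (Suc i) 0 * f 0 (Suc j))"
    by (simp add: cofactor_def det_fun_def)
  moreover have "det (L * F) = \<alpha> ^ m * det_fun (Suc m) f"
    using det_mult[OF L F] det_L by (simp add: det_fun_def F_def)
  ultimately show ?thesis
    using det_LF by simp
qed

text \<open>Rows of a minor are selected by a list, so repeated rows are allowed; such minors vanish.\<close>
definition all_minors_dvd :: "int \<Rightarrow> nat \<Rightarrow> nat \<Rightarrow> (nat \<Rightarrow> nat \<Rightarrow> int) \<Rightarrow> bool" where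
  "all_minors_dvd c m k A \<longleftrightarrow>
     (\<forall>I. length I = m \<and> set I \<subseteq> {..<k} \<longrightarrow> c dvd det_fun m (\<lambda>a b. A (I ! a) b))"

lemma all_minors_dvd_eliminate_first_column:
  fixes p :: int
  assumes "prime p" and minors: "all_minors_dvd p (Suc m) k A"
    and "i0 < k" and pivot: "\<not> p dvd A i0 0"
  shows "all_minors_dvd p m k (\<lambda>i j. A i0 0 * A i (Suc j) - A i 0 * A i0 (Suc j))"
  unfolding all_minors_dvd_def
proof (intro allI impI)
  fix I :: "nat list" assume I: "length I = m \<and> set I \<subseteq> {..<k}"
  define f where "f = (\<lambda>a b. A ((i0 # I) ! a) b)"
  have "f 0 0 * det_fun m (\<lambda>i j. A i0 0 * f (Suc i) (Suc j) - 1 * f (Suc i) 0 * f 0 (Suc j))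
        = A i0 0 ^ m * det_fun (Suc m) f"
    by (rule det_fun_eliminate_first_column) (simp add: f_def)
  moreover have "p dvd det_fun (Suc m) f"
    using minors I \<open>i0 < k\<close> unfolding all_minors_dvd_def f_def
    by (metis insert_subset length_Cons lessThan_iff list.set(2))
  ultimately have "p dvd A i0 0 * det_fun m
      (\<lambda>a b. A i0 0 * A (I ! a) (Suc b) - A (I ! a) 0 * A i0 (Suc b))"
    by (simp add: f_def)
  then show "p dvd det_fun m (\<lambda>a b. A i0 0 * A (I ! a) (Suc b) - A (I ! a) 0 * A i0 (Suc b))"
    using \<open>prime p\<close> pivot by (simp add: prime_dvd_mult_iff)
qed

lemma exists_kernel_vector_mod_prime:
  fixes p :: int
  assumes "prime p" and "all_minors_dvd p m k A"
  shows "\<exists>x. (\<exists>j<m. \<not> p dvd x j) \<and> (\<forall>i<k. p dvd (\<Sum>j<m. A i j * x j))"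
  using assms(2)
proof (induction m arbitrary: A)
  case 0
  then have "p dvd 1" by (simp add: all_minors_dvd_def det_fun_def)
  with \<open>prime p\<close> show ?case by (simp add: not_prime_unit)
next
  case (Suc m)
  show ?case
  proof (cases "\<forall>i<k. p dvd A i 0")
    case True
    then show ?thesis
      using \<open>prime p\<close> by (intro exI[of _ "\<lambda>j. if j = 0 then 1 else 0"])
        (auto simp: sum.lessThan_Suc_shift simp del: sum.lessThan_Suc)
  next
    case False
    then obtain i0 where "i0 < k" and pivot: "\<not> p dvd A i0 0" by auto
    define a where "a = A i0 0"
    define A' where "A' = (\<lambda>i j. a * A i (Suc j) - A i 0 * A i0 (Suc j))"
    obtain x' where x'_nonzero: "\<exists>j<m. \<not> p dvd x' j"
      and x'_kernel: "\<forall>i<k. p dvd (\<Sum>j<m. A' i j * x' j)"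
      using Suc.IH all_minors_dvd_eliminate_first_column[OF \<open>prime p\<close> Suc.prems \<open>i0 < k\<close> pivot]
      unfolding A'_def a_def by blast
    \<comment> \<open>back substitution: \<open>u\<close> inverts the pivot modulo p\<close>
    obtain u v where "u * a + v * p = 1"
      using bezout_int[of a p] prime_imp_coprime[OF \<open>prime p\<close>] pivot
      by (metis a_def coprime_commute coprime_iff_gcd_eq_1)
    then have inv: "p dvd 1 - a * u" by (metis add_diff_cancel_left' dvd_triv_right mult.commute)
    define s where "s = (\<Sum>j<m. A i0 (Suc j) * x' j)"
    define x where "x = (\<lambda>j. if j = 0 then - u * s else x' (j - 1))"
    show ?thesis
    proof (intro exI[of _ x] conjI allI impI)
      show "\<exists>j<Suc m. \<not> p dvd x j"
        using x'_nonzero by (metis Suc_less_eq diff_Suc_1 nat.distinct(1) x_def)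
    next
      fix i assume "i < k"
      have x_sum: "(\<Sum>j<Suc m. A i j * x j) = A i 0 * (- u * s) + (\<Sum>j<m. A i (Suc j) * x' j)"
        by (simp add: sum.lessThan_Suc_shift x_def del: sum.lessThan_Suc)
      have x'_sum: "(\<Sum>j<m. A' i j * x' j) = a * (\<Sum>j<m. A i (Suc j) * x' j) - A i 0 * s"
        by (simp add: A'_def s_def sum_distrib_left sum_subtractf left_diff_distrib mult.assoc)
      have "a * (\<Sum>j<Suc m. A i j * x j)
            = A i 0 * s * (1 - a * u) + (\<Sum>j<m. A' i j * x' j)"
        unfolding x_sum x'_sum by (simp add: algebra_simps)
      then have "p dvd a * (\<Sum>j<Suc m. A i j * x j)"
        using x'_kernel \<open>i < k\<close> inv by simp
      then show "p dvd (\<Sum>j<Suc m. A i j * x j)"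
        using \<open>prime p\<close> pivot by (simp add: prime_dvd_mult_iff a_def)
    qed
  qed
qed

lemma dvd_kernel_vector_mod_prime:
  fixes p :: int
  assumes "prime p" and det: "\<not> p dvd det_fun m C"
    and kernel: "\<forall>i<m. p dvd (\<Sum>j<m. C i j * x j)" and "j < m"
  shows "p dvd x j"
proof -
  define Cm where "Cm = mat m m (\<lambda>(i, j). C i j)"
  define xv where "xv = vec m x"
  have Cm: "Cm \<in> carrier_mat m m" and xv: "xv \<in> carrier_vec m"
    by (simp_all add: Cm_def xv_def)
  note adj = adj_mat[OF Cm]
  have "det Cm * x j = ((det Cm \<cdot>\<^sub>m 1\<^sub>m m) *\<^sub>v xv) $ j"
    using \<open>j < m\<close> by (simp add: xv_def)
  also have "\<dots> = (adj_mat Cm *\<^sub>v (Cm *\<^sub>v xv)) $ j"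
    using adj Cm xv by (metis assoc_mult_mat_vec)
  also have "\<dots> = (\<Sum>l<m. adj_mat Cm $$ (j, l) * (\<Sum>i<m. C l i * x i))"
    using \<open>j < m\<close> adj(1) Cm by (simp add: scalar_prod_def lessThan_atLeast0 Cm_def xv_def)
  also have "p dvd \<dots>"
    using kernel by (intro dvd_sum) simp
  finally have "p dvd det Cm * x j" .
  then show ?thesis
    using \<open>prime p\<close> det by (simp add: prime_dvd_mult_iff det_fun_def Cm_def)
qed

section \<open>Hadamard's inequality\<close>

definition quad_form :: "nat \<Rightarrow> (nat \<Rightarrow> nat \<Rightarrow> real) \<Rightarrow> (nat \<Rightarrow> real) \<Rightarrow> real" where
  "quad_form m P y = (\<Sum>i<m. \<Sum>j<m. y i * P i j * y j)"

definition pos_semidef :: "nat \<Rightarrow> (nat \<Rightarrow> nat \<Rightarrow> real) \<Rightarrow> bool" where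
  "pos_semidef m P \<longleftrightarrow> (\<forall>i<m. \<forall>j<m. P i j = P j i) \<and> (\<forall>y. 0 \<le> quad_form m P y)"

lemma quad_form_Suc:
  "quad_form (Suc m) P y = y 0 * P 0 0 * y 0 + y 0 * (\<Sum>j<m. P 0 (Suc j) * y (Suc j))
     + (\<Sum>i<m. y (Suc i) * P (Suc i) 0) * y 0
     + quad_form m (\<lambda>i j. P (Suc i) (Suc j)) (\<lambda>i. y (Suc i))"
  unfolding quad_form_def sum.lessThan_Suc_shift
  by (simp add: sum.distrib sum_distrib_left sum_distrib_right algebra_simps)

lemma quad_form_unit_vector: "u < m \<Longrightarrow> quad_form m P (\<lambda>i. if i = u then 1 else 0) = P u u"
  unfolding quad_form_def by (simp add: if_distrib if_distribR sum.If_cases)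

lemma pos_semidef_diag_nonneg: "pos_semidef m P \<Longrightarrow> i < m \<Longrightarrow> 0 \<le> P i i"
  using quad_form_unit_vector unfolding pos_semidef_def by metis

lemma pos_semidef_zero_diag_row:
  assumes psd: "pos_semidef (Suc m) P" and zero: "P 0 0 = 0" and "j < Suc m"
  shows "P 0 j = 0"
proof (cases j)
  case (Suc j')
  have "0 \<le> 2 * t * P 0 j + P j j" for t
  proof -
    define y where "y = (\<lambda>i. if i = 0 then t else if i = j then 1 else (0::real))"
    have unit: "(\<lambda>i. y (Suc i)) = (\<lambda>i. if i = j' then 1 else 0)"
      by (auto simp: y_def Suc)
    have delta: "x * (if c then 1 else 0) = (if c then x else 0)" for x :: real and c
      by simp
    have "quad_form (Suc m) P y = 2 * t * P 0 j + P j j"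
      using psd \<open>j < Suc m\<close> zero quad_form_unit_vector[of j' m "\<lambda>i j. P (Suc i) (Suc j)"]
      unfolding quad_form_Suc unit pos_semidef_def
      by (simp add: y_def Suc delta algebra_simps)
    then show ?thesis
      using psd unfolding pos_semidef_def by metis
  qed
  from this[of "- (P j j + 1) / (2 * P 0 j)"] show ?thesis
    by (cases "P 0 j = 0") (simp_all add: field_simps)
qed (use zero in simp)

lemma pos_semidef_schur_complement:
  assumes psd: "pos_semidef (Suc m) P" and pos: "0 < P 0 0"
  shows "pos_semidef m (\<lambda>i j. P (Suc i) (Suc j) - P (Suc i) 0 * P 0 (Suc j) / P 0 0)"
  unfolding pos_semidef_def
proof (intro conjI allI impI)
  show "P (Suc i) (Suc j) - P (Suc i) 0 * P 0 (Suc j) / P 0 0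
      = P (Suc j) (Suc i) - P (Suc j) 0 * P 0 (Suc i) / P 0 0" if "i < m" "j < m" for i j
    using psd that unfolding pos_semidef_def by (metis Suc_mono mult.commute zero_less_Suc)
next
  fix y
  define b where "b = (\<Sum>j<m. P 0 (Suc j) * y j)"
  have b_sym: "(\<Sum>i<m. y i * P (Suc i) 0) = b"
    unfolding b_def using psd by (intro sum.cong) (auto simp: pos_semidef_def)
  \<comment> \<open>complete the square: extend \<open>y\<close> by the coordinate minimizing the form of \<open>P\<close>\<close>
  define z where "z = (\<lambda>i. if i = 0 then - b / P 0 0 else y (i - 1))"
  have "quad_form m (\<lambda>i j. P (Suc i) (Suc j) - P (Suc i) 0 * P 0 (Suc j) / P 0 0) y
      = quad_form m (\<lambda>i j. P (Suc i) (Suc j)) y - b * b / P 0 0"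
  proof -
    have "quad_form m (\<lambda>i j. P (Suc i) (Suc j) - P (Suc i) 0 * P 0 (Suc j) / P 0 0) y
        = quad_form m (\<lambda>i j. P (Suc i) (Suc j)) y
          - (\<Sum>i<m. y i * P (Suc i) 0) * (\<Sum>j<m. P 0 (Suc j) * y j) / P 0 0"
      unfolding quad_form_def
      by (simp add: algebra_simps sum_subtractf sum_distrib_left sum_distrib_right sum_divide_distrib)
    then show ?thesis
      unfolding b_sym b_def .
  qed
  also have "\<dots> = z 0 * P 0 0 * z 0 + z 0 * b + b * z 0 + quad_form m (\<lambda>i j. P (Suc i) (Suc j)) y"
    using pos by (simp add: z_def field_simps)
  also have "\<dots> = quad_form (Suc m) P z"
  proof -
    have "(\<Sum>j<m. P 0 (Suc j) * z (Suc j)) = b" "(\<Sum>i<m. z (Suc i) * P (Suc i) 0) = b"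
      using b_sym by (simp_all add: z_def b_def)
    moreover have "(\<lambda>i. z (Suc i)) = y" by (simp add: z_def)
    ultimately show ?thesis
      unfolding quad_form_Suc by simp
  qed
  finally show "0 \<le> quad_form m (\<lambda>i j. P (Suc i) (Suc j) - P (Suc i) 0 * P 0 (Suc j) / P 0 0) y"
    using psd unfolding pos_semidef_def by metis
qed

lemma det_fun_le_prod_diag:
  "pos_semidef m P \<Longrightarrow> det_fun m P \<le> (\<Prod>i<m. P i i)"
proof (induction m arbitrary: P)
  case 0
  then show ?case by (simp add: det_fun_def)
next
  case (Suc m)
  show ?case
  proof (cases "P 0 0 = 0")
    case True
    have "det_fun (Suc m) P
        = (\<Sum>j<Suc m. P 0 j * cofactor (mat (Suc m) (Suc m) (\<lambda>(i, j). P i j)) 0 j)"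
      unfolding det_fun_def by (subst laplace_expansion_row[of _ "Suc m" 0]) auto
    also have "\<dots> = 0"
      using pos_semidef_zero_diag_row[OF Suc.prems True] by simp
    finally have "det_fun (Suc m) P = 0" .
    moreover have "0 \<le> (\<Prod>i<Suc m. P i i)"
      using pos_semidef_diag_nonneg[OF Suc.prems] by (intro prod_nonneg) simp
    ultimately show ?thesis by simp
  next
    case False
    then have pos: "0 < P 0 0"
      using pos_semidef_diag_nonneg[OF Suc.prems] by (simp add: order_less_le)
    define S where "S = (\<lambda>i j. P (Suc i) (Suc j) - P (Suc i) 0 * P 0 (Suc j) / P 0 0)"
    have S_psd: "pos_semidef m S"
      unfolding S_def using pos_semidef_schur_complement[OF Suc.prems pos] .
    have "P 0 0 * det_fun m S = 1 ^ m * det_fun (Suc m) P"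
      unfolding S_def using det_fun_eliminate_first_column[of 1 "1 / P 0 0" P m] pos by simp
    then have "det_fun (Suc m) P = P 0 0 * det_fun m S" by simp
    also have "\<dots> \<le> P 0 0 * (\<Prod>i<m. S i i)"
      using Suc.IH[OF S_psd] pos by simp
    also have "\<dots> \<le> P 0 0 * (\<Prod>i<m. P (Suc i) (Suc i))"
    proof -
      have "S i i \<le> P (Suc i) (Suc i)" if "i < m" for i
      proof -
        have "P (Suc i) 0 = P 0 (Suc i)"
          using Suc.prems that unfolding pos_semidef_def by blast
        then show ?thesis
          using pos by (simp add: S_def)
      qed
      then show ?thesis
        using pos pos_semidef_diag_nonneg[OF S_psd] by (intro mult_left_mono prod_mono) auto
    qed
    also have "\<dots> = (\<Prod>i<Suc m. P i i)"
      by (rule prod.lessThan_Suc_shift[symmetric])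
    finally show ?thesis .
  qed
qed

lemma pos_semidef_gram: "pos_semidef m (\<lambda>i j. \<Sum>l<n. C i l * C j l)"
  unfolding pos_semidef_def
proof (intro conjI allI impI)
  fix y
  have "quad_form m (\<lambda>i j. \<Sum>l<n. C i l * C j l) y = (\<Sum>l<n. (\<Sum>i<m. y i * C i l)\<^sup>2)"
    unfolding quad_form_def power2_eq_square sum_product sum_distrib_left sum_distrib_right
    by (subst sum.swap) (simp add: sum.swap[of _ "{..<n}"] algebra_simps)
  then show "0 \<le> quad_form m (\<lambda>i j. \<Sum>l<n. C i l * C j l) y"
    by (simp add: sum_nonneg)
qed (simp add: mult.commute)

lemma hadamard_inequality_int:
  fixes C :: "nat \<Rightarrow> nat \<Rightarrow> int"
  assumes bound: "\<forall>i<m. \<forall>j<m. \<bar>C i j\<bar> \<le> B"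
  shows "(det_fun m C)\<^sup>2 \<le> (int m * B\<^sup>2) ^ m"
proof -
  define Cr where "Cr = mat m m (\<lambda>(i, j). real_of_int (C i j))"
  define P where "P = (\<lambda>i j. \<Sum>l<m. real_of_int (C i l) * real_of_int (C j l))"
  have Cr: "Cr \<in> carrier_mat m m" by (simp add: Cr_def)
  have "map_mat real_of_int (mat m m (\<lambda>(i, j). C i j)) = Cr"
    by (rule eq_matI) (auto simp: Cr_def)
  then have det_Cr: "det Cr = real_of_int (det_fun m C)"
    unfolding det_fun_def by (metis of_int_hom.hom_det)
  have "mat m m (\<lambda>(i, j). P i j) = Cr * transpose_mat Cr"
    by (rule eq_matI) (auto simp: P_def Cr_def scalar_prod_def lessThan_atLeast0)
  then have "(det Cr)\<^sup>2 = det_fun m P"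
    unfolding det_fun_def using det_mult[OF Cr, of "transpose_mat Cr"] det_transpose[OF Cr] Cr
    by (simp add: power2_eq_square)
  also have "det_fun m P \<le> (\<Prod>i<m. P i i)"
    unfolding P_def by (rule det_fun_le_prod_diag[OF pos_semidef_gram])
  also have "\<dots> \<le> (\<Prod>i<m. real m * (real_of_int B)\<^sup>2)"
  proof (rule prod_mono)
    fix i assume "i \<in> {..<m}"
    have "(real_of_int (C i l))\<^sup>2 \<le> (real_of_int B)\<^sup>2" if "l < m" for l
      using bound \<open>i \<in> {..<m}\<close> that
      by (metis abs_ge_zero lessThan_iff of_int_abs of_int_le_iff power2_abs power_mono)
    then have "P i i \<le> (\<Sum>l<m. (real_of_int B)\<^sup>2)"
      unfolding P_def power2_eq_square by (intro sum_mono) auto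
    then show "0 \<le> P i i \<and> P i i \<le> real m * (real_of_int B)\<^sup>2"
      by (auto simp: P_def intro!: sum_nonneg)
  qed
  finally have "real_of_int ((det_fun m C)\<^sup>2) \<le> real_of_int ((int m * B\<^sup>2) ^ m)"
    using det_Cr by (simp add: power_mult_distrib)
  then show ?thesis by linarith
qed

lemma kernel_mod_prime_transfer:
  fixes p q :: int and A :: "nat \<Rightarrow> nat \<Rightarrow> int"
  assumes "prime q" and "prime p"
    and trivial_mod_q: "\<And>y. \<forall>i<k. q dvd (\<Sum>j<m. A i j * y j) \<Longrightarrow> \<forall>j<m. q dvd y j"
    and bound: "\<forall>i<k. \<forall>j<m. \<bar>A i j\<bar> \<le> B" and small: "(int m * B\<^sup>2) ^ m < p\<^sup>2"
    and kernel_mod_p: "\<forall>i<k. p dvd (\<Sum>j<m. A i j * x j)" and "j < m"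
  shows "p dvd x j"
proof -
  have "\<not> all_minors_dvd q m k A"
    using exists_kernel_vector_mod_prime[OF \<open>prime q\<close>] trivial_mod_q by blast
  then obtain I where I: "length I = m" "set I \<subseteq> {..<k}"
    and minor: "\<not> q dvd det_fun m (\<lambda>a b. A (I ! a) b)"
    unfolding all_minors_dvd_def by blast
  have rows: "I ! a < k" if "a < m" for a
    using I that by (auto simp: subset_iff)
  define D where "D = det_fun m (\<lambda>a b. A (I ! a) b)"
  have "D\<^sup>2 \<le> (int m * B\<^sup>2) ^ m"
    unfolding D_def using bound rows by (intro hadamard_inequality_int) auto
  then have "\<bar>D\<bar>\<^sup>2 < p\<^sup>2"
    unfolding power2_abs using small by (rule le_less_trans)
  then have "\<bar>D\<bar> < p"
    by (rule power2_less_imp_less) (use prime_gt_0_int[OF \<open>prime p\<close>] in linarith)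
  moreover have "D \<noteq> 0"
    using minor by (auto simp: D_def)
  ultimately have "\<not> p dvd D"
    by (auto dest: dvd_imp_le_int)
  then show ?thesis
    using kernel_mod_p rows \<open>j < m\<close> unfolding D_def
    by (intro dvd_kernel_vector_mod_prime[OF \<open>prime p\<close>]) auto
qed

section \<open>Paulis restricted to a support\<close>

definition pvec_cong :: "nat \<Rightarrow> nat \<Rightarrow> pvec \<Rightarrow> pvec \<Rightarrow> bool" where
  "pvec_cong r n u v \<longleftrightarrow> (\<forall>l<n. int r dvd fst u l - fst v l \<and> int r dvd snd u l - snd v l)"

lemma pvec_cong_reduce: "pvec_cong r n (reduce r u) u"
  unfolding pvec_cong_def reduce_def by (simp flip: mod_eq_dvd_iff)

lemma pvec_cong_of_invariant_form:
  assumes "invariant_form q n k S M" and "i < k"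
  shows "pvec_cong q n (S i) (M i)"
  using assms unfolding invariant_form_def pvec_cong_def by (metis mod_eq_dvd_iff mod_mod_trivial)

lemma sympl_cong:
  assumes u: "pvec_cong r n u u'" and v: "pvec_cong r n v v'"
  shows "int r dvd sympl n u v - sympl n u' v'"
proof -
  have "int r dvd (snd v l * fst u l - fst v l * snd u l) - (snd v' l * fst u' l - fst v' l * snd u' l)"
    if "l < n" for l
  proof -
    have "(snd v l * fst u l - fst v l * snd u l) - (snd v' l * fst u' l - fst v' l * snd u' l)
        = snd v l * (fst u l - fst u' l) + (snd v l - snd v' l) * fst u' l
          - (fst v l * (snd u l - snd u' l) + (fst v l - fst v' l) * snd u' l)"
      by (simp add: algebra_simps)
    then show ?thesis
      using u v that unfolding pvec_cong_def by (simp add: dvd_diff dvd_add)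
  qed
  then show ?thesis
    unfolding sympl_def sum_subtractf[symmetric] by (auto intro: dvd_sum)
qed

definition support :: "nat \<Rightarrow> pvec \<Rightarrow> nat set" where
  "support n u = {l. l < n \<and> (fst u l, snd u l) \<noteq> (0, 0)}"

lemma weight_eq_card_support: "weight n u = card (support n u)"
  by (simp add: weight_def support_def)

lemma finite_support [simp]: "finite (support n u)"
  by (simp add: support_def)

definition coords :: "nat list \<Rightarrow> pvec \<Rightarrow> nat \<Rightarrow> int" where
  "coords T u j = (if j < length T then fst u (T ! j) else snd u (T ! (j - length T)))"

definition sympl_coeffs :: "nat list \<Rightarrow> pvec \<Rightarrow> nat \<Rightarrow> int" where
  "sympl_coeffs T v j = (if j < length T then snd v (T ! j) else - fst v (T ! (j - length T)))"

definition of_coords :: "nat list \<Rightarrow> (nat \<Rightarrow> int) \<Rightarrow> pvec" where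
  "of_coords T y =
     ((\<lambda>l. if l \<in> set T then y (the_inv_into {..<length T} ((!) T) l) else 0),
      (\<lambda>l. if l \<in> set T then y (length T + the_inv_into {..<length T} ((!) T) l) else 0))"

lemma sum_lessThan_add:
  fixes f :: "nat \<Rightarrow> 'a::comm_monoid_add"
  shows "(\<Sum>j<m + n. f j) = (\<Sum>j<m. f j) + (\<Sum>j<n. f (m + j))"
  by (induction n) (simp_all add: add.assoc)

lemma sympl_eq_sum_coords:
  assumes "distinct T" and "set T \<subseteq> {..<n}" and "support n u \<subseteq> set T"
  shows "sympl n u v = (\<Sum>j<2 * length T. sympl_coeffs T v j * coords T u j)"
proof -
  define g where "g = (\<lambda>l. snd v l * fst u l - fst v l * snd u l)"
  have "sympl n u v = sum g {..<n}" by (simp add: sympl_def g_def)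
  also have "\<dots> = sum g (set T)"
    using assms(2,3) by (intro sum.mono_neutral_right) (auto simp: g_def support_def)
  also have "\<dots> = (\<Sum>t<length T. g (T ! t))"
    using \<open>distinct T\<close>
    by (simp add: sum_list_distinct_conv_sum_set[symmetric] sum_list_sum_nth lessThan_atLeast0)
  also have "\<dots> = (\<Sum>j<length T + length T. sympl_coeffs T v j * coords T u j)"
    unfolding sum_lessThan_add
    by (simp add: g_def sympl_coeffs_def coords_def sum_subtractf sum.distrib[symmetric])
  finally show ?thesis by (simp add: mult_2)
qed

lemma coords_of_coords:
  assumes "distinct T" and "j < 2 * length T"
  shows "coords T (of_coords T y) j = y j"
proof -
  have inv: "the_inv_into {..<length T} ((!) T) (T ! t) = t" if "t < length T" for t
    using assms(1) that by (intro the_inv_into_f_f) (auto intro: inj_on_nth)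
  show ?thesis
    using assms(2) by (auto simp: coords_def of_coords_def inv)
qed

lemma support_of_coords: "support n (of_coords T y) \<subseteq> set T"
  by (auto simp: support_def of_coords_def)

lemma coords_reduce: "coords T (reduce r u) j = coords T u j mod int r"
  by (simp add: coords_def reduce_def)

lemma support_empty_iff_coords_zero:
  assumes "set T \<subseteq> {..<n}" and "support n u \<subseteq> set T"
  shows "support n u = {} \<longleftrightarrow> (\<forall>j<2 * length T. coords T u j = 0)"
proof
  assume "support n u = {}"
  then have "fst u l = 0 \<and> snd u l = 0" if "l \<in> set T" for l
    using assms(1) that by (auto simp: support_def)
  then show "\<forall>j<2 * length T. coords T u j = 0"
    by (auto simp: coords_def)
next
  assume zero: "\<forall>j<2 * length T. coords T u j = 0"
  have "fst u (T ! t) = 0 \<and> snd u (T ! t) = 0" if "t < length T" for t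
    using zero[rule_format, of t] zero[rule_format, of "length T + t"] that
    by (simp add: coords_def)
  then show "support n u = {}"
    using assms(2) by (force simp: in_set_conv_nth support_def)
qed

lemma coords_mem_range:
  assumes "is_vec r n u" and "set T \<subseteq> {..<n}" and "j < 2 * length T"
  shows "coords T u j \<in> {0..<int r}"
  using assms unfolding is_vec_def coords_def by (auto simp: subset_iff)

lemma abs_sympl_coeffs_le_max_entry:
  assumes "i < k" and "set T \<subseteq> {..<n}" and "j < 2 * length T"
  shows "\<bar>sympl_coeffs T (M i) j\<bar> \<le> max_entry n k M"
proof -
  define E where
    "E = {\<bar>fst (M i) l\<bar> | i l. i < k \<and> l < n} \<union> {\<bar>snd (M i) l\<bar> | i l. i < k \<and> l < n}"
  have entries: "\<bar>fst (M i) l\<bar> \<in> E" "\<bar>snd (M i) l\<bar> \<in> E" if "l < n" for l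
    using assms(1) that unfolding E_def by blast+
  have "T ! j' < n" if "j' < length T" for j'
    using assms(2) that by (auto simp: subset_iff)
  then have "\<bar>sympl_coeffs T (M i) j\<bar> \<in> E"
    using assms(3) entries unfolding sympl_coeffs_def by auto
  then show ?thesis
    unfolding max_entry_def E_def[symmetric] by (intro Max_ge) (auto simp: E_def finite_image_set2)
qed

lemma max_entry_nonneg: "0 \<le> max_entry n k M"
  unfolding max_entry_def by (intro Max_ge) (auto simp: finite_image_set2)

section \<open>The distance modulo a large prime\<close>

lemma distance_le_weight: "undetectable r n k G e \<Longrightarrow> distance r n k G \<le> weight n e"
  unfolding distance_def by (rule Least_le) blast

lemma le_distance:
  assumes "\<exists>e. undetectable r n k G e" and "\<And>e. undetectable r n k G e \<Longrightarrow> d \<le> weight n e"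
  shows "d \<le> distance r n k G"
proof -
  have "\<exists>e. undetectable r n k G e \<and> weight n e = distance r n k G"
    unfolding distance_def by (rule LeastI_ex) (use assms(1) in blast)
  then show ?thesis
    using assms(2) by metis
qed

lemma stabilizer_generators_reduce:
  assumes "0 < p" and orth: "\<forall>i<k. \<forall>j<k. sympl n (M i) (M j) = 0"
  shows "stabilizer_generators p n k (\<lambda>i. reduce p (M i))"
  unfolding stabilizer_generators_def
proof (intro conjI allI impI)
  show "is_vec p n (reduce p (M i))" for i
    using \<open>0 < p\<close> by (simp add: is_vec_def reduce_def)
  show "sympl n (reduce p (M i)) (reduce p (M j)) mod int p = 0" if "i < k" "j < k" for i j
    using sympl_cong[OF pvec_cong_reduce pvec_cong_reduce, of p n "M i" "M j"] orth that
    by (simp add: dvd_eq_mod_eq_0)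
qed

lemma exists_undetectable:
  assumes "2 \<le> r" and "0 < n" and gens: "stabilizer_generators r n k G"
  shows "\<exists>e. undetectable r n k G e"
proof (cases "\<exists>j<k. 0 < weight n (G j)")
  case True
  \<comment> \<open>a nontrivial generator commutes with all generators\<close>
  then show ?thesis
    using gens unfolding stabilizer_generators_def undetectable_def by blast
next
  case False
  then have "support n (G j) = {}" if "j < k" for j
    using that by (simp add: weight_eq_card_support)
  then have "sympl n ((\<lambda>l. if l = 0 then 1 else 0), (\<lambda>l. 0)) (G j) = 0" if "j < k" for j
    using that unfolding sympl_def support_def by (intro sum.neutral) auto
  moreover have "support n ((\<lambda>l. if l = 0 then 1 else 0), (\<lambda>l. 0)) = {0}"
    using \<open>0 < n\<close> by (auto simp: support_def)
  ultimately show ?thesis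
    using \<open>2 \<le> r\<close> unfolding undetectable_def
    by (intro exI[of _ "((\<lambda>l. if l = 0 then 1 else 0), (\<lambda>l. 0))"])
      (auto simp: is_vec_def weight_eq_card_support)
qed

lemma coords_kernel_trivial_below_distance:
  assumes "0 < q" and T: "distinct T" "set T \<subseteq> {..<n}" and short: "length T < distance q n k S"
    and cong: "\<forall>i<k. pvec_cong q n (S i) (M i)"
    and kernel: "\<forall>i<k. int q dvd (\<Sum>j<2 * length T. sympl_coeffs T (M i) j * y j)"
  shows "\<forall>j<2 * length T. int q dvd y j"
proof (rule ccontr)
  assume "\<not> (\<forall>j<2 * length T. int q dvd y j)"
  then obtain j0 where "j0 < 2 * length T" and "\<not> int q dvd y j0" by blast
  \<comment> \<open>the solution modulo q is an undetectable error supported on T\<close>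
  define e where "e = reduce q (of_coords T y)"
  have supp: "support n e \<subseteq> set T"
    using support_of_coords[of n T y] by (auto simp: support_def e_def reduce_def)
  have "coords T e j0 \<noteq> 0"
    using \<open>j0 < 2 * length T\<close> \<open>\<not> int q dvd y j0\<close>
    by (simp add: e_def coords_reduce coords_of_coords[OF T(1)] dvd_eq_mod_eq_0)
  then have "support n e \<noteq> {}"
    using support_empty_iff_coords_zero[OF T(2) supp] \<open>j0 < 2 * length T\<close> by blast
  moreover have "int q dvd sympl n e (S i)" if "i < k" for i
  proof -
    have "sympl n (of_coords T y) (M i) = (\<Sum>j<2 * length T. sympl_coeffs T (M i) j * y j)"
      using sympl_eq_sum_coords[OF T support_of_coords] coords_of_coords[OF T(1)] by simp
    then have "int q dvd sympl n (of_coords T y) (M i)"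
      using kernel that by simp
    moreover have "int q dvd sympl n e (S i) - sympl n (of_coords T y) (M i)"
      unfolding e_def using cong that by (intro sympl_cong pvec_cong_reduce) simp
    ultimately have "int q dvd (sympl n e (S i) - sympl n (of_coords T y) (M i))
                               + sympl n (of_coords T y) (M i)"
      by (intro dvd_add)
    then show ?thesis by simp
  qed
  ultimately have undetectable: "undetectable q n k S e"
    using \<open>0 < q\<close> unfolding undetectable_def
    by (auto simp: is_vec_def e_def reduce_def weight_eq_card_support card_gt_0_iff dvd_eq_mod_eq_0)
  moreover have "weight n e \<le> length T"
    using supp T(1) card_mono[OF _ supp] by (simp add: weight_eq_card_support distinct_card)
  ultimately show False
    using distance_le_weight[OF undetectable] short by linarith
qed

lemma undetectable_reduce_coords_kernel:
  assumes "undetectable p n k (\<lambda>i. reduce p (M i)) e"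
    and T: "distinct T" "set T \<subseteq> {..<n}" "support n e \<subseteq> set T"
  shows "\<forall>i<k. int p dvd (\<Sum>j<2 * length T. sympl_coeffs T (M i) j * coords T e j)"
proof (intro allI impI)
  fix i assume "i < k"
  then have "int p dvd sympl n e (reduce p (M i))"
    using assms(1) by (simp add: undetectable_def dvd_eq_mod_eq_0)
  moreover have "int p dvd sympl n e (reduce p (M i)) - sympl n e (M i)"
    by (rule sympl_cong[OF _ pvec_cong_reduce]) (simp add: pvec_cong_def)
  ultimately have "int p dvd sympl n e (reduce p (M i))
                             - (sympl n e (reduce p (M i)) - sympl n e (M i))"
    by (rule dvd_diff)
  then have "int p dvd sympl n e (M i)"
    by simp
  then show "int p dvd (\<Sum>j<2 * length T. sympl_coeffs T (M i) j * coords T e j)"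
    using sympl_eq_sum_coords[OF T] by simp
qed

lemma hadamard_bound_le:
  fixes B :: int
  assumes "0 < w" and "w \<le> d - 1" and "0 \<le> B"
  shows "(int (2 * w) * B\<^sup>2) ^ (2 * w) \<le> (B ^ (2 * (d - 1)) * int (2 * (d - 1)) ^ (d - 1))\<^sup>2"
proof -
  have "int (2 * w) ^ w \<le> int (2 * (d - 1)) ^ w"
    by (rule power_mono) (use assms in simp_all)
  also have "\<dots> \<le> int (2 * (d - 1)) ^ (d - 1)"
    by (rule power_increasing) (use assms in simp_all)
  finally have "int (2 * w) ^ w \<le> int (2 * (d - 1)) ^ (d - 1)" .
  moreover have "B ^ (2 * w) \<le> B ^ (2 * (d - 1))"
    using assms by (cases "B = 0") (simp_all add: power_increasing power_0_left)
  ultimately have "int (2 * w) ^ w * B ^ (2 * w) \<le> B ^ (2 * (d - 1)) * int (2 * (d - 1)) ^ (d - 1)"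
    using \<open>0 \<le> B\<close> by (simp add: mult.commute mult_mono)
  moreover have "(int (2 * w) * B\<^sup>2) ^ (2 * w) = (int (2 * w) ^ w * B ^ (2 * w))\<^sup>2"
    by (simp add: power_mult_distrib power_mult[symmetric] mult.commute)
  ultimately show ?thesis
    using \<open>0 \<le> B\<close> by (simp add: power_mono)
qed

lemma weight_ge_of_undetectable_reduce:
  assumes "prime q" and "prime p" and inv: "invariant_form q n k S M"
    and dist: "distance q n k S = d"
    and large: "max_entry n k M ^ (2 * (d - 1)) * int (2 * (d - 1)) ^ (d - 1) < int p"
    and err: "undetectable p n k (\<lambda>i. reduce p (M i)) e"
  shows "d \<le> weight n e"
proof (rule ccontr)
  assume "\<not> d \<le> weight n e"
  define T where "T = sorted_list_of_set (support n e)"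
  have T: "distinct T" "set T \<subseteq> {..<n}" "support n e \<subseteq> set T"
    by (auto simp: T_def support_def)
  have w: "length T = weight n e" "0 < length T"
    using err by (simp_all add: T_def weight_eq_card_support undetectable_def)
  have trivial_mod_q: "\<forall>j<2 * length T. int q dvd y j"
    if "\<forall>i<k. int q dvd (\<Sum>j<2 * length T. sympl_coeffs T (M i) j * y j)" for y
    using that pvec_cong_of_invariant_form[OF inv] dist w \<open>\<not> d \<le> weight n e\<close>
    by (intro coords_kernel_trivial_below_distance[OF prime_gt_0_nat[OF \<open>prime q\<close>] T(1,2)]) auto
  have small: "(int (2 * length T) * (max_entry n k M)\<^sup>2) ^ (2 * length T) < (int p)\<^sup>2"
  proof -
    have "(int (2 * length T) * (max_entry n k M)\<^sup>2) ^ (2 * length T)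
        \<le> (max_entry n k M ^ (2 * (d - 1)) * int (2 * (d - 1)) ^ (d - 1))\<^sup>2"
      using w \<open>\<not> d \<le> weight n e\<close> max_entry_nonneg by (intro hadamard_bound_le) auto
    also have "\<dots> < (int p)\<^sup>2"
      using large by (intro power_strict_mono) (simp_all add: max_entry_nonneg)
    finally show ?thesis .
  qed
  have "coords T e j = 0" if "j < 2 * length T" for j
  proof -
    have "0 \<le> coords T e j" "coords T e j < int p"
      using coords_mem_range[OF _ T(2) that, of p e] err by (simp_all add: undetectable_def)
    moreover have "int p dvd coords T e j"
      using kernel_mod_prime_transfer[OF _ _ trivial_mod_q _ small
          undetectable_reduce_coords_kernel[OF err T] that]
        \<open>prime q\<close> \<open>prime p\<close> abs_sympl_coeffs_le_max_entry[OF _ T(2)]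
      by (simp add: prime_nat_int_transfer)
    ultimately show ?thesis
      by (metis order_le_less zdvd_not_zless)
  qed
  then have "weight n e = 0"
    using support_empty_iff_coords_zero[OF T(2,3)] by (simp add: weight_eq_card_support)
  with w show False by simp
qed

theorem theorem3:
  fixes q p n k d :: nat and S M :: "nat \<Rightarrow> pvec"
  assumes "prime q"
    and "stabilizer_generators q n k S"
    and "distance q n k S = d"
    and "non_degenerate q n k S d"
    and "invariant_form q n k S M"
    and "prime p"
    and "int p > max_entry n k M ^ (2 * (d - 1)) * int (2 * (d - 1)) ^ (d - 1)"
  shows "distance p n k (\<lambda>i. reduce p (M i)) \<ge> d"
proof (cases "n = 0")
  case True
  \<comment> \<open>no undetectable errors exist, so both distances are the same junk value of \<open>LEAST\<close>\<close>
  then have "distance p n k (\<lambda>i. reduce p (M i)) = distance q n k S"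
    by (simp add: distance_def undetectable_def weight_def)
  with assms(3) show ?thesis by simp
next
  case False
  have "stabilizer_generators p n k (\<lambda>i. reduce p (M i))"
    using assms(5,6) prime_gt_0_nat unfolding invariant_form_def
    by (intro stabilizer_generators_reduce) auto
  then have "\<exists>e. undetectable p n k (\<lambda>i. reduce p (M i)) e"
    using False prime_ge_2_nat[OF assms(6)] by (intro exists_undetectable) auto
  then show ?thesis
    using weight_ge_of_undetectable_reduce[OF assms(1,6,5,3,7)] by (rule le_distance)
qed

end
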